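(* Neither $Cond_{CB}$ nor $Lex_{CB}$ is universal: for each $R\in\{Cond,Lex\}$ there exist a stubbornness function $D$ and an epistemic space $\mathbb{S}$ that is identifiable in the limit (by some learner) but is not identifiable in the limit by $R_{CB}$ with stubbornness function $D$.
   Context: An epistemic space is a pair $\mathbb{S}=(S,\mathcal{O})$ where $S$ is a non-empty, at most countable set of worlds and $\mathcal{O}\subseteq\mathcal{P}(S)$ is a set of observables. A data stream is an infinite sequence $\vec O=(O_0,O_1,\ldots)$ with each $O_i\in\mathcal{O}$; $\vec O[n]=(O_0,\ldots,O_{n-1})$. A stream is sound for $s\in S$ if $s\in O_n$ for all $n$, and complete for $s$ if every $O\in\mathcal{O}$ with $s\in O$ occurs in $\vec O$. A learner is any function mapping $\mathbb{S}$ and finite data sequences to subsets of $S$. A world $s$ is identified in the limit by a learner $L$ if for every stream $\vec O$ sound and complete for $s$ there is $k$ with $L(\mathbb{S},\vec O[n])=\{s\}$ for all $n\ge k$; $\mathbb{S}$ is identified by $L$ if every $s\in S$ is; $\mathbb{S}$ is identifiable in the limit if some learner identifies it. A plausibility space is $\mathbb{B}=(S,\mathcal{O},\preceq)$ with $\preceq$ a total preorder on $S$; $\min_\preceq X$ is the set of $\preceq$-minimal elements of $X$. One-step methods, for a proposition $p\subseteq S$, $\bar p=S\setminus p$: - $Cond_1(\mathbb{B},p)=(S\cap p,\mathcal{O},\preceq\cap((S\cap p)\times(S\cap p)))$. - $Lex_1(\mathbb{B},p)=(S,\mathcal{O},\preceq')$ with $t\preceq' w$ iff ($t,w\in p$ and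 $t\preceq w$) or ($t,w\in\bar p$ and $t\preceq w$) or ($t\in p$, $w\notin p$). A stubbornness function is any $D:\mathcal{P}(S)\to\mathbb{N}$. For a one-step method $R_1$, $R_{CB}(\mathbb{B},\lambda)=\mathbb{B}$ and $R_{CB}(\mathbb{B},\sigma\cdot p)=R_1(R_{CB}(\mathbb{B},\sigma),p)$ if $\#p(\sigma)\ge D(\bar p)$, otherwise $R_{CB}(\mathbb{B},\sigma\cdot p)=R_{CB}(\mathbb{B},\sigma)$, where $\#p(\sigma)$ is the number of occurrences of $p$ in $\sigma$. $Cond_{CB}$, $Lex_{CB}$ arise from $R_1=Cond_1,Lex_1$. The learner $L^\preceq_{R_{CB}}$ maps $\sigma$ to $\min_{\preceq'}S'$ where $R_{CB}((S,\mathcal{O},\preceq),\sigma)=(S',\mathcal{O},\preceq')$. $\mathbb{S}$ is identifiable by $R_{CB}$ if some total preorder $\preceq$ makes $L^\preceq_{R_{CB}}$ identify $\mathbb{S}$ in the limit. A method is universal if it identifies every epistemic space that is identifiable in the limit. *)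

theory Defs
  imports Main "HOL-Library.Countable_Set"
begin

(* Worlds are natural numbers: every at most countable set of worlds embeds into nat. *)
type_synonym world = nat
type_synonym wprop = "world set"

definition epistemic_space :: "world set \<Rightarrow> wprop set \<Rightarrow> bool" where
  "epistemic_space S Obs \<longleftrightarrow> S \<noteq> {} \<and> countable S \<and> Obs \<subseteq> Pow S"

definition data_stream :: "wprop set \<Rightarrow> (nat \<Rightarrow> wprop) \<Rightarrow> bool" where
  "data_stream Obs f \<longleftrightarrow> (\<forall>i. f i \<in> Obs)"

definition prefix_of :: "(nat \<Rightarrow> wprop) \<Rightarrow> nat \<Rightarrow> wprop list" where
  "prefix_of f n = map f [0..<n]"

definition sound_for :: "(nat \<Rightarrow> wprop) \<Rightarrow> world \<Rightarrow> bool" where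
  "sound_for f s \<longleftrightarrow> (\<forall>n. s \<in> f n)"

definition complete_for :: "wprop set \<Rightarrow> (nat \<Rightarrow> wprop) \<Rightarrow> world \<Rightarrow> bool" where
  "complete_for Obs f s \<longleftrightarrow> (\<forall>A\<in>Obs. s \<in> A \<longrightarrow> (\<exists>n. f n = A))"

type_synonym learner = "world set \<Rightarrow> wprop set \<Rightarrow> wprop list \<Rightarrow> world set"

definition identifies_world :: "world set \<Rightarrow> wprop set \<Rightarrow> learner \<Rightarrow> world \<Rightarrow> bool" where
  "identifies_world S Obs L s \<longleftrightarrow>
     (\<forall>f. data_stream Obs f \<and> sound_for f s \<and> complete_for Obs f s \<longrightarrow>
          (\<exists>k. \<forall>n\<ge>k. L S Obs (prefix_of f n) = {s}))"

definition identifies :: "world set \<Rightarrow> wprop set \<Rightarrow> learner \<Rightarrow> bool" where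
  "identifies S Obs L \<longleftrightarrow> (\<forall>s\<in>S. identifies_world S Obs L s)"

definition identifiable :: "world set \<Rightarrow> wprop set \<Rightarrow> bool" where
  "identifiable S Obs \<longleftrightarrow> (\<exists>L. identifies S Obs L)"

text \<open>Plausibility state: current set of worlds and current plausibility relation
  (the observables never change, so they are not part of the state).\<close>
type_synonym pstate = "world set \<times> (world \<times> world) set"

definition cond1 :: "pstate \<Rightarrow> wprop \<Rightarrow> pstate" where
  "cond1 B p = (let S' = fst B \<inter> p in (S', snd B \<inter> (S' \<times> S')))"

definition lex1 :: "pstate \<Rightarrow> wprop \<Rightarrow> pstate" where
  "lex1 B p = (fst B,
     {(t, w). ((t, w) \<in> snd B \<and> t \<in> p \<and> w \<in> p)
            \<or> ((t, w) \<in> snd B \<and> t \<in> fst B - p \<and> w \<in> fst B - p)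
            \<or> (t \<in> fst B \<inter> p \<and> w \<in> fst B - p)})"

text \<open>Iterated revision with stubbornness D: R_CB(B, sigma . p) = R1(R_CB(B,sigma), p) if
  #p(sigma) >= D(S - p), else R_CB(B, sigma). The argument hist is the already processed
  prefix sigma; S is the set of worlds of the original space (complement taken there).\<close>
fun rcb_aux :: "(pstate \<Rightarrow> wprop \<Rightarrow> pstate) \<Rightarrow> (wprop \<Rightarrow> nat) \<Rightarrow> world set
                 \<Rightarrow> pstate \<Rightarrow> wprop list \<Rightarrow> wprop list \<Rightarrow> pstate" where
  "rcb_aux R1 D S B hist [] = B"
| "rcb_aux R1 D S B hist (p # ps) =
     rcb_aux R1 D S (if count_list hist p \<ge> D (S - p) then R1 B p else B) (hist @ [p]) ps"

definition rcb :: "(pstate \<Rightarrow> wprop \<Rightarrow> pstate) \<Rightarrow> (wprop \<Rightarrow> nat) \<Rightarrow> world set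
                 \<Rightarrow> pstate \<Rightarrow> wprop list \<Rightarrow> pstate" where
  "rcb R1 D S B \<sigma> = rcb_aux R1 D S B [] \<sigma>"

definition minimal_elems :: "(world \<times> world) set \<Rightarrow> world set \<Rightarrow> world set" where
  "minimal_elems R X = {x \<in> X. \<forall>y\<in>X. (y, x) \<in> R \<longrightarrow> (x, y) \<in> R}"

definition total_preorder_on :: "world set \<Rightarrow> (world \<times> world) set \<Rightarrow> bool" where
  "total_preorder_on S R \<longleftrightarrow> R \<subseteq> S \<times> S \<and> refl_on S R \<and> trans R \<and> total_on S R"

definition rcb_learner :: "(pstate \<Rightarrow> wprop \<Rightarrow> pstate) \<Rightarrow> (wprop \<Rightarrow> nat) \<Rightarrow> (world \<times> world) set
                            \<Rightarrow> learner" where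
  "rcb_learner R1 D R S Obs \<sigma> =
     (let B' = rcb R1 D S (S, R) \<sigma> in minimal_elems (snd B') (fst B'))"

definition identifiable_by_rcb :: "(pstate \<Rightarrow> wprop \<Rightarrow> pstate) \<Rightarrow> (wprop \<Rightarrow> nat)
                                   \<Rightarrow> world set \<Rightarrow> wprop set \<Rightarrow> bool" where
  "identifiable_by_rcb R1 D S Obs \<longleftrightarrow>
     (\<exists>R. total_preorder_on S R \<and> identifies S Obs (rcb_learner R1 D R))"

end

theory Submission
  imports Defs
begin

text \<open>With stubbornness 1 a revision method acts on an observation only from its second
  occurrence on. Take worlds 0 and 1 with observables S = {0, 1} and {1}. A complete stream
  for world 1 may show {1} once and then repeat the uninformative S forever, so the revised
  plausibility space never changes and the induced learner cannot tell this stream apart from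
  the constant stream S for world 0. A learner that answers {1} as soon as {1} has been
  observed, and {0} otherwise, identifies the space.\<close>

text \<open>An observation p occurring at most D(S - p) times in the whole history never reaches
  its stubbornness threshold, so it is skipped at each occurrence.\<close>

lemma rcb_aux_unchanged:
  assumes "\<forall>p\<in>set xs. R1 B p = B \<or> count_list (h @ xs) p \<le> D (S - p)"
  shows "rcb_aux R1 D S B h xs = B"
  using assms
proof (induction xs arbitrary: h)
  case Nil
  then show ?case by simp
next
  case (Cons p ps)
  have skipped: "R1 B p = B \<or> \<not> D (S - p) \<le> count_list h p"
    using Cons.prems by auto
  have "rcb_aux R1 D S B (h @ [p]) ps = B"
    using Cons.prems by (intro Cons.IH) auto
  then show ?case
    using skipped by auto
qed

lemma cond1_superset_fixed:
  assumes "R \<subseteq> S \<times> S" "S \<subseteq> p"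
  shows "cond1 (S, R) p = (S, R)"
  using assms by (auto simp: cond1_def Let_def)

lemma lex1_superset_fixed:
  assumes "R \<subseteq> S \<times> S" "S \<subseteq> p"
  shows "lex1 (S, R) p = (S, R)"
  using assms by (auto simp: lex1_def)

lemma not_identifies_indistinguishable:
  assumes "s \<in> S" "t \<in> S" "s \<noteq> t"
    and "data_stream Obs f" "sound_for f s" "complete_for Obs f s"
    and "data_stream Obs g" "sound_for g t" "complete_for Obs g t"
    and same_output: "\<And>n. L S Obs (prefix_of f n) = L S Obs (prefix_of g n)"
  shows "\<not> identifies S Obs L"
proof
  assume "identifies S Obs L"
  then have "identifies_world S Obs L s" "identifies_world S Obs L t"
    using assms(1,2) by (auto simp: identifies_def)
  then obtain k l where
      "\<forall>n\<ge>k. L S Obs (prefix_of f n) = {s}" "\<forall>n\<ge>l. L S Obs (prefix_of g n) = {t}"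
    using assms(4-9) unfolding identifies_world_def by blast
  then have "{s} = {t}"
    using same_output[of "k + l"] by simp
  with \<open>s \<noteq> t\<close> show False by simp
qed

definition S01 :: "world set" where
  "S01 = {0, 1}"

definition Obs01 :: "wprop set" where
  "Obs01 = {S01, {1}}"

lemma epistemic_space_S01: "epistemic_space S01 Obs01"
  by (auto simp: epistemic_space_def S01_def Obs01_def)

lemma set_prefix_of: "set (prefix_of f n) = f ` {..<n}"
  by (auto simp: prefix_of_def)

lemma identifiable_S01: "identifiable S01 Obs01"
proof -
  define L :: learner where "L = (\<lambda>_ _ \<sigma>. if {1} \<in> set \<sigma> then {1} else {0})"
  have "identifies_world S01 Obs01 L s" if "s \<in> S01" for s
    unfolding identifies_world_def
  proof (intro allI impI)
    fix f assume f: "data_stream Obs01 f \<and> sound_for f s \<and> complete_for Obs01 f s"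
    show "\<exists>k. \<forall>n\<ge>k. L S01 Obs01 (prefix_of f n) = {s}"
    proof (cases "s = 0")
      case True
      then have "{1} \<notin> range f"
        using f by (auto simp: sound_for_def)
      then have "L S01 Obs01 (prefix_of f n) = {s}" for n
        using True by (auto simp: L_def set_prefix_of)
      then show ?thesis
        by blast
    next
      case False
      then have "s = 1"
        using that by (simp add: S01_def)
      then obtain m where "f m = {1}"
        using f by (auto simp: complete_for_def Obs01_def)
      then have "L S01 Obs01 (prefix_of f n) = {s}" if "n > m" for n
        using that \<open>s = 1\<close> by (auto simp: L_def set_prefix_of)
      then show ?thesis
        by (meson Suc_le_eq)
    qed
  qed
  then show ?thesis
    by (auto simp: identifiable_def identifies_def)
qed

lemma not_identifiable_by_rcb_S01:
  assumes fixes_S01: "\<And>R. R \<subseteq> S01 \<times> S01 \<Longrightarrow> R1 (S01, R) S01 = (S01, R)"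
  shows "\<not> identifiable_by_rcb R1 (\<lambda>_. 1) S01 Obs01"
proof
  assume "identifiable_by_rcb R1 (\<lambda>_. 1) S01 Obs01"
  then obtain R where R: "R \<subseteq> S01 \<times> S01"
    and identifies: "identifies S01 Obs01 (rcb_learner R1 (\<lambda>_. 1) R)"
    by (auto simp: identifiable_by_rcb_def total_preorder_on_def)
  define f :: "nat \<Rightarrow> wprop" where "f = (\<lambda>_. S01)"
  define g :: "nat \<Rightarrow> wprop" where "g = (\<lambda>i. if i = 0 then {1} else S01)"
  have prefix_f: "prefix_of f n = replicate n S01" for n
    by (simp add: prefix_of_def f_def map_replicate_const)
  have prefix_g: "prefix_of g (Suc n) = {1} # replicate n S01" for n
  proof -
    have "map g [1..<Suc n] = replicate n S01"
      by (induction n) (auto simp: g_def replicate_append_same)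
    moreover have "[0..<Suc n] = 0 # [1..<Suc n]"
      using upt_conv_Cons[of 0 "Suc n"] by simp
    moreover have "g 0 = {1}"
      by (simp add: g_def)
    ultimately show ?thesis
      unfolding prefix_of_def by simp
  qed
  have unchanged: "rcb R1 (\<lambda>_. 1) S01 (S01, R) \<sigma> = (S01, R)"
    if "\<sigma> = replicate n S01 \<or> \<sigma> = {1} # replicate n S01" for \<sigma> n
    unfolding rcb_def using that fixes_S01[OF R]
    by (intro rcb_aux_unchanged) (auto simp: S01_def)
  have "rcb R1 (\<lambda>_. 1) S01 (S01, R) (prefix_of f n) = (S01, R)" for n
    by (rule unchanged[of _ n]) (simp add: prefix_f)
  moreover have "rcb R1 (\<lambda>_. 1) S01 (S01, R) (prefix_of g n) = (S01, R)" for n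
  proof (cases n)
    case 0
    then show ?thesis
      by (intro unchanged[of _ 0]) (simp add: prefix_of_def)
  next
    case (Suc k)
    then show ?thesis
      by (intro unchanged[of _ k]) (simp add: prefix_g)
  qed
  ultimately have "rcb_learner R1 (\<lambda>_. 1) R S01 Obs01 (prefix_of f n)
      = rcb_learner R1 (\<lambda>_. 1) R S01 Obs01 (prefix_of g n)" for n
    by (simp add: rcb_learner_def)
  moreover have "data_stream Obs01 f" "sound_for f 0" "complete_for Obs01 f 0"
    "data_stream Obs01 g" "sound_for g 1" "complete_for Obs01 g 1"
    by (auto simp: data_stream_def sound_for_def complete_for_def f_def g_def Obs01_def S01_def)
  ultimately show False
    using identifies not_identifies_indistinguishable[of 0 S01 1]
    by (simp add: S01_def)
qed

theorem mainTheorem2: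
  shows "(\<exists>D S Obs. epistemic_space S Obs \<and> identifiable S Obs \<and> \<not> identifiable_by_rcb cond1 D S Obs)
       \<and> (\<exists>D S Obs. epistemic_space S Obs \<and> identifiable S Obs \<and> \<not> identifiable_by_rcb lex1 D S Obs)"
proof -
  have "\<not> identifiable_by_rcb cond1 (\<lambda>_. 1) S01 Obs01"
    by (rule not_identifiable_by_rcb_S01) (simp add: cond1_superset_fixed)
  moreover have "\<not> identifiable_by_rcb lex1 (\<lambda>_. 1) S01 Obs01"
    by (rule not_identifiable_by_rcb_S01) (simp add: lex1_superset_fixed)
  ultimately show ?thesis
    using epistemic_space_S01 identifiable_S01 by blast
qed

end
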